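(* Let $(\mathcal{D}_1,\mathcal{D}_2,\dots)$ be a data stream for which at least one $f\in\mathcal{F}$ is consistent with every $\mathcal{D}_t$. Then: (i) $\mathsf{P}(\mathcal{D}_t)\supseteq\mathsf{P}(\mathcal{D}_{t+1})$ for all $t$; (ii) $\mathsf{P}(\mathcal{D}_\infty):=\left(\bigcap_{k=1}^\infty\mathsf{P}(\mathcal{D}_k)\right)\cap\mathsf{K}$ is non-empty; (iii) if $\theta_t\in\mathsf{P}(\mathcal{D}_t)$ for all $t$ and $\lim_{t\to\infty}\theta_t=\theta_\infty$, then $\theta_\infty\in\mathsf{P}(\mathcal{D}_\infty)$.
   Context: $\mathcal{F}$ is a set of functions $\mathbb{N}\times\mathcal{X}\times\mathcal{U}\to\mathcal{X}$ with compact parametrization $(\mathbb{T},\mathsf{K},d)$: $(\mathsf{K},d)$ compact metric space, $\mathbb{T}:\mathsf{K}\to2^{\mathcal{F}}$, $\mathcal{F}\subseteq\bigcup_\theta\mathbb{T}[\theta]$. A data stream is a sequence $\mathcal{D}_t=(d_1,\dots,d_t)$ of data sets formed from observations $d_i=(t_i,x^+_i,x_i,u_i)$; $f$ is consistent with $\mathcal{D}$ if $x^+=f(t,x,u)$ for all $(t,x^+,x,u)\in\mathcal{D}$. $\mathsf{P}(\mathcal{D})$ is the closure of $\{\theta\in\mathsf{K}:\exists f\in\mathbb{T}[\theta]\text{ consistent with }\mathcal{D}\}$. *)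

theory Defs
  imports "HOL-Analysis.Analysis"
begin

text \<open>Observations are tuples (t, x_plus, x, u); a data set is a set of observations.\<close>
type_synonym ('x, 'u) obs = "nat \<times> 'x \<times> 'x \<times> 'u"

definition consistent :: "(nat \<Rightarrow> 'x \<Rightarrow> 'u \<Rightarrow> 'x) \<Rightarrow> ('x, 'u) obs set \<Rightarrow> bool" where
  "consistent f D \<longleftrightarrow> (\<forall>(t, xp, x, u) \<in> D. xp = f t x u)"

definition data_set :: "(nat \<Rightarrow> ('x, 'u) obs) \<Rightarrow> nat \<Rightarrow> ('x, 'u) obs set" where
  "data_set d t = d ` {1..t}"

definition param_set :: "'k::metric_space set \<Rightarrow> ('k \<Rightarrow> (nat \<Rightarrow> 'x \<Rightarrow> 'u \<Rightarrow> 'x) set)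
    \<Rightarrow> ('x, 'u) obs set \<Rightarrow> 'k set" where
  "param_set K T D = closure {\<theta> \<in> K. \<exists>f \<in> T \<theta>. consistent f D}"

end

theory Submission
  imports Defs
begin

text \<open>Consistency with more data is a stronger requirement, so the parameter sets decrease along
  the data stream. A parameter of the function consistent with the whole stream lies in every
  one of them, and since parameter sets are closed, a convergent sequence that eventually enters
  each of these decreasing sets has its limit in all of them.\<close>

lemma consistent_subset: "consistent f B \<Longrightarrow> A \<subseteq> B \<Longrightarrow> consistent f A"
  unfolding consistent_def by blast

lemma data_set_mono: "s \<le> t \<Longrightarrow> data_set d s \<subseteq> data_set d t"
  unfolding data_set_def by auto

lemma param_set_antimono: "A \<subseteq> B \<Longrightarrow> param_set K T B \<subseteq> param_set K T A"
  unfolding param_set_def by (intro closure_mono) (blast intro: consistent_subset)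

lemma decseq_param_set_data_set: "decseq (\<lambda>t. param_set K T (data_set d t))"
  by (rule antimonoI) (intro param_set_antimono data_set_mono)

lemma closed_param_set: "closed (param_set K T D)"
  unfolding param_set_def by simp

lemma param_set_subset: "closed K \<Longrightarrow> param_set K T D \<subseteq> K"
  unfolding param_set_def by (intro closure_minimal) auto

lemma param_set_memI:
  "\<theta> \<in> K \<Longrightarrow> f \<in> T \<theta> \<Longrightarrow> consistent f D \<Longrightarrow> \<theta> \<in> param_set K T D"
  unfolding param_set_def by (rule subsetD[OF closure_subset]) blast

lemma LIMSEQ_in_decseq_closed:
  assumes "decseq A" "closed (A k)"
    and "eventually (\<lambda>t. \<theta> t \<in> A t) sequentially" "\<theta> \<longlonglongrightarrow> l"
  shows "l \<in> A k"
proof (rule Lim_in_closed_set[OF \<open>closed (A k)\<close> _ _ \<open>\<theta> \<longlonglongrightarrow> l\<close>])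
  have "A t \<subseteq> A k" if "k \<le> t" for t
    using \<open>decseq A\<close> that by (rule antimonoD)
  then have "eventually (\<lambda>t. A t \<subseteq> A k) sequentially"
    by (rule eventually_sequentiallyI)
  then show "eventually (\<lambda>t. \<theta> t \<in> A k) sequentially"
    using assms(3) by eventually_elim blast
qed simp

theorem mainTheorem13:
  fixes K :: "'k::metric_space set"
    and T :: "'k \<Rightarrow> (nat \<Rightarrow> 'x \<Rightarrow> 'u \<Rightarrow> 'x) set"
    and F :: "(nat \<Rightarrow> 'x \<Rightarrow> 'u \<Rightarrow> 'x) set"
    and d :: "nat \<Rightarrow> ('x, 'u) obs"
  assumes K_compact: "compact K"
    and T_into_F: "\<forall>\<theta>\<in>K. T \<theta> \<subseteq> F"
    and F_covered: "F \<subseteq> (\<Union>\<theta>\<in>K. T \<theta>)"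
    and consistent_exists: "\<exists>f\<in>F. \<forall>t\<ge>1. consistent f (data_set d t)"
  shows "(\<forall>t\<ge>1. param_set K T (data_set d (t + 1)) \<subseteq> param_set K T (data_set d t))
    \<and> (\<Inter>k\<in>{1..}. param_set K T (data_set d k)) \<inter> K \<noteq> {}
    \<and> (\<forall>(\<theta>::nat \<Rightarrow> 'k) \<theta>_inf. (\<forall>t\<ge>1. \<theta> t \<in> param_set K T (data_set d t)) \<and> \<theta> \<longlonglongrightarrow> \<theta>_inf
          \<longrightarrow> \<theta>_inf \<in> (\<Inter>k\<in>{1..}. param_set K T (data_set d k)) \<inter> K)"
proof -
  let ?P = "\<lambda>t. param_set K T (data_set d t)"
  obtain f \<theta>\<^sub>0 where "\<theta>\<^sub>0 \<in> K" "f \<in> T \<theta>\<^sub>0" "\<forall>t\<ge>1. consistent f (data_set d t)"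
    using consistent_exists F_covered by blast
  then have "\<theta>\<^sub>0 \<in> ?P k" if "k \<ge> 1" for k
    using that by (intro param_set_memI) auto
  with \<open>\<theta>\<^sub>0 \<in> K\<close> have nonempty: "(\<Inter>k\<in>{1..}. ?P k) \<inter> K \<noteq> {}"
    by blast
  show ?thesis
  proof (intro conjI allI impI nonempty)
    fix t :: nat
    show "?P (t + 1) \<subseteq> ?P t"
      by (intro param_set_antimono data_set_mono) simp
  next
    fix \<theta> :: "nat \<Rightarrow> 'k" and \<theta>_inf
    assume "(\<forall>t\<ge>1. \<theta> t \<in> ?P t) \<and> \<theta> \<longlonglongrightarrow> \<theta>_inf"
    then have "eventually (\<lambda>t. \<theta> t \<in> ?P t) sequentially" "\<theta> \<longlonglongrightarrow> \<theta>_inf"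
      unfolding eventually_sequentially by blast+
    then have in_P: "\<theta>_inf \<in> ?P k" for k
      by (rule LIMSEQ_in_decseq_closed[OF decseq_param_set_data_set closed_param_set])
    moreover have "\<theta>_inf \<in> K"
      using param_set_subset[OF compact_imp_closed[OF K_compact]] in_P by (rule subsetD)
    ultimately show "\<theta>_inf \<in> (\<Inter>k\<in>{1..}. ?P k) \<inter> K" by simp
  qed
qed

end
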